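(* Let \(P\in R\) be a singular vector for the Neveu–Schwarz action on \(R\), i.e. \(L_nP=0\) for all integers \(n>0\) and \(G_rP=0\) for all \(r\in\mathbb Z+\tfrac12\), \(r>0\). Then there are unique coefficients \(a_{\lambda,J}\in\mathbb C\), only finitely many nonzero, indexed by partitions \(\lambda\) and finite subsets \(J\subset\mathbb Z_{\ge0}\), such that \(P=\sum_{\lambda,J}a_{\lambda,J}\,\mathsf s_\lambda(p)\,q_J\). Consequently \(\Phi(P)=\sum_{\lambda,J}a_{\lambda,J}[\Sigma_\lambda]\otimes[\Sigma_J^{\mathrm{odd}}]\in H^*(\mathrm{Fred}_0\times\mathrm{Fred}_{\mathrm{sa}}^1;\mathbb C)\), and \(\Phi(P)\) is singular for the Neveu–Schwarz action on \(\mathcal F\).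
   Context: \(R=\mathbb C[p_1,p_2,\dots]\otimes\Lambda_{\mathbb C}(\widetilde p_0,\widetilde p_1,\dots)\). Let \(\beta=\sqrt2\). Operators on \(R\): for \(n>0\), \(a_{-n}=(-1)^{n-1}p_n/\beta\), \(a_n=(-1)^{n-1}\beta n\,\partial/\partial p_n\), \(a_0=0\); for \(m\ge0\), \(b_{-(m+1/2)}=(-1)^m\widetilde p_m\), \(b_{m+1/2}=(-1)^m\partial/\partial\widetilde p_m\) (left odd derivative). Then \(L_n=\tfrac12\sum_{m\in\mathbb Z}:a_ma_{n-m}:+\tfrac14\sum_{r\in\mathbb Z+1/2}(n-2r):b_rb_{n-r}:\) and \(G_r=\sum_{m\in\mathbb Z}a_mb_{r-m}\), where normal ordering moves modes of negative index to the left of modes of positive index (with the Koszul sign for odd modes). \(\mathcal F=H^*(\mathrm{Fred}_0\times\mathrm{Fred}_{\mathrm{sa}}^1;\mathbb C)=\mathbb C[x_1,x_2,\dots]\otimes\Lambda_{\mathbb C}(y_{1/2},y_{3/2},\dots)\), where \(x_n\) is the degree-\(2n\) component of the universal Chern character on \(\mathrm{Fred}_0\) (index-zero Fredholm operators) and \(y_{m+1/2}\) the degree-\((2m+1)\) component of the universal odd Chern character on \(\mathrm{Fred}_{\mathrm{sa}}^1\) (non-contractible component of self-adjoint Fredholm operators), with universal odd Chern class \(c_{m+1/2}=m!\,y_{m+1/2}\). On \(\mathcal F\) the same formulas for \(L_n,G_r\) are used with \(a_{-n}=(-1)^{n-1}n!x_n/\beta\), \(a_n=(-1)^{n-1}\frac{\beta}{(n-1)!}\partial/\partial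 x_n\), \(b_{-(m+1/2)}=(-1)^mm!\,y_{m+1/2}\), \(b_{m+1/2}=\frac{(-1)^m}{m!}\partial/\partial y_{m+1/2}\). \(\Phi:R\to\mathcal F\) is the graded-commutative algebra isomorphism with \(\Phi(p_n)=n!x_n\), \(\Phi(\widetilde p_m)=m!y_{m+1/2}\). Define \(e_m(p)\) by \(\sum_m e_m(p)t^m=\exp(\sum_{n\ge1}(-1)^{n-1}p_nt^n/n)\); for \(\lambda=(\lambda_1,\dots,\lambda_k)\), \(\mathsf s_\lambda(p)=\det(e_{\lambda_a+b-a}(p))_{1\le a,b\le k}\); for \(J=\{j_1<\dots<j_m\}\), \(q_J=\widetilde p_{j_1}\cdots\widetilde p_{j_m}\), \(q_\varnothing=1\). \([\Sigma_J^{\mathrm{odd}}]=c_{j_1+1/2}\cdots c_{j_m+1/2}\) (\(=1\) for \(J=\varnothing\)); \([\Sigma_\lambda]\in H^{2|\lambda|}(\mathrm{Fred}_0)\) is the generalized Koschorke class: \(\sigma_k^*\) (with \(\sigma_k(T)=L_kT\), \(L_k\) the backward \(k\)-shift on \(\ell^2(\mathbb N_0)\)) of the Cibotaru quasi-manifold class of the Schur–Koschorke locus \(\{T\in\mathrm{Fred}_k:\dim(\ker T\cap W_{\lambda_i+k-i})\ge i\}\) for the flag \(W_j=\overline{\mathrm{span}}\{e_j,e_{j+1},\dots\}\); it equals \(\det(c_{\lambda_a+b-a})\) in Chern classes normalized by \(c_i=c_i(-\mathrm{Ind})\). *)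

theory Defs
  imports "HOL-Library.Poly_Mapping" "HOL-Library.Groups_Big_Fun"
          "HOL-Computational_Algebra.Formal_Power_Series"
          "HOL-Combinatorics.Permutations"
begin

text \<open>Even part: C[v_1, v_2, ...] as finitely supported maps from exponent vectors
 (key n = exponent of the n-th even variable) to complex coefficients.\<close>
type_synonym epoly = "(nat \<Rightarrow>\<^sub>0 nat) \<Rightarrow>\<^sub>0 complex"

text \<open>An element of R = C[p_1,p_2,...] (x) Lambda(pt_0, pt_1, ...) is written uniquely as
 sum over finite S of P(S) * q_S, where q_S is the ordered product pt_{j1}...pt_{jm}, j1<...<jm,
 and P(S) is an even polynomial. The same model is used for F with x_n, y_{m+1/2}.\<close>
type_synonym spoly = "nat set \<Rightarrow> epoly"

definition wf_spoly :: "spoly \<Rightarrow> bool" where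
  "wf_spoly P \<longleftrightarrow> finite {S. P S \<noteq> 0} \<and> (\<forall>S. P S \<noteq> 0 \<longrightarrow> finite S)
     \<and> (\<forall>S. \<forall>e \<in> Poly_Mapping.keys (P S). Poly_Mapping.lookup e 0 = 0)"

definition cconst :: "complex \<Rightarrow> epoly" where
  "cconst c = Poly_Mapping.single 0 c"

definition evar :: "nat \<Rightarrow> epoly" where
  "evar n = Poly_Mapping.single (Poly_Mapping.single n 1) 1"

definition pderiv_e :: "nat \<Rightarrow> epoly \<Rightarrow> epoly" where
  "pderiv_e n f = (\<Sum>e\<in>Poly_Mapping.keys f. Poly_Mapping.single (e - Poly_Mapping.single n 1)
                     (Poly_Mapping.lookup f e * of_nat (Poly_Mapping.lookup e n)))"

definition scal :: "complex \<Rightarrow> spoly \<Rightarrow> spoly" where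
  "scal c P = (\<lambda>S. cconst c * P S)"

definition qsign :: "nat \<Rightarrow> nat set \<Rightarrow> complex" where
  "qsign m S = (-1) ^ card {j\<in>S. j < m}"

definition oddmul :: "nat \<Rightarrow> spoly \<Rightarrow> spoly" where
  "oddmul m P = (\<lambda>S. if m \<in> S then cconst (qsign m (S - {m})) * P (S - {m}) else 0)"

definition oddder :: "nat \<Rightarrow> spoly \<Rightarrow> spoly" where
  "oddder m P = (\<lambda>S. if m \<in> S then 0 else cconst (qsign m S) * P (insert m S))"

definition one_s :: spoly where
  "one_s = (\<lambda>S. if S = {} then 1 else 0)"

text \<open>Ordered product of odd generators: q_J = pt_{j1} pt_{j2} ... pt_{jm}, j1 < ... < jm,
 computed as iterated left multiplication (weight w j on generator j).\<close>
definition oddprod :: "(nat \<Rightarrow> complex) \<Rightarrow> nat set \<Rightarrow> spoly" where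
  "oddprod w J = foldr (\<lambda>j acc. scal (w j) (oddmul j acc)) (sorted_list_of_set J) one_s"

definition beta :: complex where "beta = complex_of_real (sqrt 2)"

definition halfint :: "rat set" where
  "halfint = {r. \<exists>k::int. r = of_int k + 1/2}"

definition amode :: "(nat \<Rightarrow> complex) \<Rightarrow> (nat \<Rightarrow> complex) \<Rightarrow> int \<Rightarrow> spoly \<Rightarrow> spoly" where
  "amode cc ca n P =
    (if n < 0 then (\<lambda>S. cconst (cc (nat (-n))) * (evar (nat (-n)) * P S))
     else if n > 0 then (\<lambda>S. cconst (ca (nat n)) * pderiv_e (nat n) (P S))
     else (\<lambda>S. 0))"

text \<open>Fermionic modes b_r, r in Z+1/2: b_{-(m+1/2)} = dc m * (left mult. by odd var m),
 b_{m+1/2} = dd m * (left odd derivative); b_r = 0 for r not a half-integer (never used).\<close>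
definition bmode :: "(nat \<Rightarrow> complex) \<Rightarrow> (nat \<Rightarrow> complex) \<Rightarrow> rat \<Rightarrow> spoly \<Rightarrow> spoly" where
  "bmode dc dd r P =
    (if r \<in> halfint \<and> r < 0 then scal (dc (nat \<lfloor>-r\<rfloor>)) (oddmul (nat \<lfloor>-r\<rfloor>) P)
     else if r \<in> halfint \<and> r > 0 then scal (dd (nat \<lfloor>r\<rfloor>)) (oddder (nat \<lfloor>r\<rfloor>) P)
     else (\<lambda>S. 0))"

definition nord_a :: "(int \<Rightarrow> spoly \<Rightarrow> spoly) \<Rightarrow> int \<Rightarrow> int \<Rightarrow> spoly \<Rightarrow> spoly" where
  "nord_a A m k P = (if m > 0 \<and> k < 0 then A k (A m P) else A m (A k P))"

definition nord_b :: "(rat \<Rightarrow> spoly \<Rightarrow> spoly) \<Rightarrow> rat \<Rightarrow> rat \<Rightarrow> spoly \<Rightarrow> spoly" where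
  "nord_b B r s P = (if r > 0 \<and> s < 0 then - B s (B r P) else B r (B s P))"

definition Lop :: "(int \<Rightarrow> spoly \<Rightarrow> spoly) \<Rightarrow> (rat \<Rightarrow> spoly \<Rightarrow> spoly) \<Rightarrow> int \<Rightarrow> spoly \<Rightarrow> spoly" where
  "Lop A B n P = (\<lambda>S.
      cconst (1/2) * Sum_any (\<lambda>m. nord_a A m (n - m) P S)
    + cconst (1/4) * Sum_any (\<lambda>r. (if r \<in> halfint then
          cconst (of_rat (of_int n - 2 * r)) * nord_b B r (of_int n - r) P S else 0)))"

definition Gop :: "(int \<Rightarrow> spoly \<Rightarrow> spoly) \<Rightarrow> (rat \<Rightarrow> spoly \<Rightarrow> spoly) \<Rightarrow> rat \<Rightarrow> spoly \<Rightarrow> spoly" where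
  "Gop A B r P = (\<lambda>S. Sum_any (\<lambda>m. A m (B (r - of_int m) P) S))"

definition NS_singular :: "(int \<Rightarrow> spoly \<Rightarrow> spoly) \<Rightarrow> (rat \<Rightarrow> spoly \<Rightarrow> spoly) \<Rightarrow> spoly \<Rightarrow> bool" where
  "NS_singular A B P \<longleftrightarrow> (\<forall>n::int. n > 0 \<longrightarrow> Lop A B n P = (\<lambda>S. 0))
      \<and> (\<forall>r. r \<in> halfint \<and> r > 0 \<longrightarrow> Gop A B r P = (\<lambda>S. 0))"

definition aR :: "int \<Rightarrow> spoly \<Rightarrow> spoly" where
  "aR = amode (\<lambda>n. (-1) ^ (n - 1) / beta) (\<lambda>n. (-1) ^ (n - 1) * beta * of_nat n)"
definition bR :: "rat \<Rightarrow> spoly \<Rightarrow> spoly" where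
  "bR = bmode (\<lambda>m. (-1) ^ m) (\<lambda>m. (-1) ^ m)"

definition aF :: "int \<Rightarrow> spoly \<Rightarrow> spoly" where
  "aF = amode (\<lambda>n. (-1) ^ (n - 1) * fact n / beta) (\<lambda>n. (-1) ^ (n - 1) * beta / fact (n - 1))"
definition bF :: "rat \<Rightarrow> spoly \<Rightarrow> spoly" where
  "bF = bmode (\<lambda>m. (-1) ^ m * fact m) (\<lambda>m. (-1) ^ m / fact m)"

text \<open>Graded-commutative algebra map with p_n |-> n! x_n, pt_m |-> m! y_{m+1/2},
 written out on the monomial basis p^e q_S.\<close>
definition Phi_even :: "epoly \<Rightarrow> epoly" where
  "Phi_even f = (\<Sum>e\<in>Poly_Mapping.keys f. Poly_Mapping.single e
       (Poly_Mapping.lookup f e * (\<Prod>n\<in>Poly_Mapping.keys e. (fact n) ^ Poly_Mapping.lookup e n)))"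

definition Phi :: "spoly \<Rightarrow> spoly" where
  "Phi P = (\<lambda>S. cconst (\<Prod>m\<in>S. fact m) * Phi_even (P S))"

text \<open>Coefficient of t^m in exp(X) = sum_k X^k / k!, X a power series with zero constant term
 (only k <= m contribute).\<close>
definition exp_coeff :: "epoly fps \<Rightarrow> nat \<Rightarrow> epoly" where
  "exp_coeff X m = (\<Sum>k\<le>m. cconst (1 / fact k) * fps_nth (X ^ k) m)"

definition esym :: "int \<Rightarrow> epoly" where
  "esym m = (if m < 0 then 0 else exp_coeff
     (Abs_fps (\<lambda>n. if n = 0 then 0 else cconst ((-1) ^ (n - 1) / of_nat n) * evar n)) (nat m))"

text \<open>Chern classes c_i (of -Ind) in terms of the Chern character components x_n:
 c(t) = exp(sum_n (-1)^(n-1) (n-1)! ch_n t^n).\<close>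
definition chern :: "int \<Rightarrow> epoly" where
  "chern m = (if m < 0 then 0 else exp_coeff
     (Abs_fps (\<lambda>n. if n = 0 then 0 else cconst ((-1) ^ (n - 1) * fact (n - 1)) * evar n)) (nat m))"

definition detm :: "nat \<Rightarrow> (nat \<Rightarrow> nat \<Rightarrow> epoly) \<Rightarrow> epoly" where
  "detm k M = (\<Sum>\<sigma> | \<sigma> permutes {..<k}. of_int (sign \<sigma>) * (\<Prod>a<k. M a (\<sigma> a)))"

definition is_partition :: "nat list \<Rightarrow> bool" where
  "is_partition l \<longleftrightarrow> sorted_wrt (\<ge>) l \<and> (\<forall>x\<in>set l. x > 0)"

text \<open>Jacobi--Trudi: s_lambda = det(e_{lambda_a + b - a}), 1-based indices a,b.\<close>
definition schur :: "nat list \<Rightarrow> epoly" where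
  "schur l = detm (length l) (\<lambda>a b. esym (int (l ! a) + int b - int a))"

definition koschorke :: "nat list \<Rightarrow> epoly" where
  "koschorke l = detm (length l) (\<lambda>a b. chern (int (l ! a) + int b - int a))"

definition schur_q :: "nat list \<Rightarrow> nat set \<Rightarrow> spoly" where
  "schur_q l J = (\<lambda>S. schur l * oddprod (\<lambda>_. 1) J S)"

text \<open>[Sigma_lambda] (x) [Sigma_J^odd] in F, with c_{j+1/2} = j! y_{j+1/2}.\<close>
definition class_F :: "nat list \<Rightarrow> nat set \<Rightarrow> spoly" where
  "class_F l J = (\<lambda>S. koschorke l * oddprod (\<lambda>j. fact j) J S)"

definition schur_expansion :: "(nat list \<Rightarrow> nat set \<Rightarrow> complex) \<Rightarrow> spoly \<Rightarrow> bool" where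
  "schur_expansion a P \<longleftrightarrow> finite {(l, J). a l J \<noteq> 0}
     \<and> (\<forall>l J. a l J \<noteq> 0 \<longrightarrow> is_partition l \<and> finite J)
     \<and> P = (\<lambda>S. Sum_any (\<lambda>(l, J). scal (a l J) (schur_q l J) S))"

end

theory Submission
  imports Defs "HOL-Library.Multiset_Order"
begin

(* The substitution p_n \<mapsto> n! x_n, pt_m \<mapsto> m! y_{m+1/2} is an algebra isomorphism under
   which multiplication by p_n, the derivation d/dp_n, left multiplication by pt_m and the odd
   derivation d/dpt_m become n!, 1/n!, m! and 1/m! times their counterparts on F.  The normalisations
   of the modes on F compensate exactly these factors, so Phi intertwines every a_n and b_r, hence
   every L_n and G_r, and maps singular vectors to singular vectors.  The same substitution turns
   the generating series of the e_m into the total Chern class, so s_\<lambda> \<mapsto> [\<Sigma>_\<lambda>] and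
   q_J \<mapsto> [\<Sigma>_J^odd].

   Existence and uniqueness of the expansion is the fact that the s_\<lambda> form a basis of
   C[p_1, p_2, ...].  Since e_n = (-1)^(n-1) p_n / n plus
   products of p_k with k < n, the products e_M span; the Jacobi-Trudi determinant is unitriangular
   for the multiset order, so the s_\<lambda> span the e_M; and the e_M are independent because the
   lowest-degree term of e_M is a nonzero multiple of the monomial p_M. *)

lemma lookup_cconst_mult: "Poly_Mapping.lookup (cconst c * f) e = c * Poly_Mapping.lookup f e"
  unfolding cconst_def mult_map_scale_conv_mult[symmetric]
  by (simp add: Poly_Mapping.map.rep_eq when_def)

lemma cconst_mult: "cconst (a * b) = cconst a * cconst b"
  by (simp add: cconst_def mult_single)

lemma cconst_add: "cconst (a + b) = cconst a + cconst b"
  by (simp add: cconst_def single_add)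

lemma cconst_0 [simp]: "cconst 0 = 0"
  by (simp add: cconst_def)

lemma cconst_1 [simp]: "cconst 1 = 1"
  by (simp add: cconst_def)

lemma cconst_of_int: "cconst (of_int k) = of_int k"
  by (simp add: cconst_def)

lemma cconst_sum: "cconst (sum g A) = (\<Sum>x\<in>A. cconst (g x))"
  by (induction A rule: infinite_finite_induct) (auto simp: cconst_add)

lemma cconst_eq_0_iff [simp]: "cconst c = 0 \<longleftrightarrow> c = 0"
  by (metis cconst_def lookup_single_eq single_zero)

lemma cconst_mult_eq_0_iff: "cconst c * f = 0 \<longleftrightarrow> c = 0 \<or> f = 0"
  by (metis cconst_eq_0_iff lookup_cconst_mult lookup_zero mult_eq_0_iff mult_zero_left
      poly_mapping_eqI)

lemma cconst_mult_evar: "cconst c * evar n = Poly_Mapping.single (Poly_Mapping.single n 1) c"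
  by (simp add: cconst_def evar_def mult_single)

lemma keys_cconst_mult: "Poly_Mapping.keys (cconst c * f) \<subseteq> Poly_Mapping.keys f"
  by (auto simp: in_keys_iff lookup_cconst_mult)

lemma poly_mapping_sum_single:
  "f = (\<Sum>k\<in>Poly_Mapping.keys f. Poly_Mapping.single k (Poly_Mapping.lookup f k))"
  by (rule poly_mapping_eqI) (simp add: lookup_sum lookup_single when_def in_keys_iff)

interpretation epoly: module "\<lambda>c (f::epoly). cconst c * f"
  by unfold_locales (simp_all add: cconst_add cconst_mult algebra_simps)

context module
begin

lemma span_image_Sum_any:
  assumes "x \<in> span (B ` I)"
  shows "\<exists>a. finite {i. a i \<noteq> 0} \<and> (\<forall>i. a i \<noteq> 0 \<longrightarrow> i \<in> I) \<and> x = Sum_any (\<lambda>i. a i *s B i)"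
  using assms
proof (induction rule: span_induct_alt)
  case base
  show ?case by (intro exI[of _ "\<lambda>_. 0"]) simp
next
  case (step c x y)
  then obtain i a where i: "i \<in> I" "x = B i"
    and a: "finite {j. a j \<noteq> 0}" "\<forall>j. a j \<noteq> 0 \<longrightarrow> j \<in> I" "y = Sum_any (\<lambda>j. a j *s B j)"
    by blast
  define a' where "a' = a(i := a i + c)"
  have "{j. a' j \<noteq> 0} \<subseteq> insert i {j. a j \<noteq> 0}"
    by (auto simp: a'_def)
  then have fin: "finite {j. a' j \<noteq> 0}"
    using a(1) by (rule finite_subset[OF _ finite_insert[THEN iffD2]])
  have "Sum_any (\<lambda>j. a' j *s B j) = Sum_any (\<lambda>j. a j *s B j + (c *s B j when i = j))"
    by (rule Sum_any.cong) (simp add: a'_def when_def scale_left_distrib)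
  also have "\<dots> = y + c *s x"
    using a(1) i(2) a(3)
    by (subst Sum_any.distrib) (auto intro: finite_subset[OF _ a(1)] simp: when_def)
  finally show ?case
    using fin a(2) i(1) by (intro exI[of _ a']) (auto simp: a'_def add.commute)
qed

lemma Sum_any_scale_diff:
  assumes "finite {i. a i \<noteq> 0}" "finite {i. b i \<noteq> 0}"
  shows "Sum_any (\<lambda>i. a i *s B i) - Sum_any (\<lambda>i. b i *s B i) = Sum_any (\<lambda>i. (a i - b i) *s B i)"
proof -
  let ?F = "{i. a i \<noteq> 0} \<union> {i. b i \<noteq> 0}"
  have fin: "finite ?F" using assms by simp
  have "Sum_any (\<lambda>i. a i *s B i) - Sum_any (\<lambda>i. b i *s B i)
      = (\<Sum>i\<in>?F. a i *s B i) - (\<Sum>i\<in>?F. b i *s B i)"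
    using fin by (subst (1 2) Sum_any.expand_superset[of ?F]) auto
  also have "\<dots> = (\<Sum>i\<in>?F. (a i - b i) *s B i)"
    by (simp add: sum_subtractf[symmetric] scale_left_diff_distrib)
  also have "\<dots> = Sum_any (\<lambda>i. (a i - b i) *s B i)"
    using fin by (subst Sum_any.expand_superset[of ?F]) auto
  finally show ?thesis .
qed

end

lemma epoly_span_mult:
  assumes closed: "\<And>x y. x \<in> S \<Longrightarrow> y \<in> S \<Longrightarrow> x * y \<in> S"
    and f: "f \<in> epoly.span S" and g: "g \<in> epoly.span S"
  shows "f * g \<in> epoly.span S"
proof -
  have "x * g \<in> epoly.span S" if x: "x \<in> S" for x
    using g
  proof (induction rule: epoly.span_induct_alt)
    case (step c y z)
    have "x * (cconst c * y + z) = cconst c * (x * y) + x * z"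
      by (simp add: algebra_simps)
    then show ?case
      using step closed[OF x] by (auto intro: epoly.span_add epoly.span_scale epoly.span_base)
  qed (simp add: epoly.span_zero)
  with f show ?thesis
  proof (induction rule: epoly.span_induct_alt)
    case (step c x y)
    have "(cconst c * x + y) * g = cconst c * (x * g) + y * g"
      by (simp add: algebra_simps)
    then show ?case
      using step by (auto intro: epoly.span_add epoly.span_scale)
  qed (simp add: epoly.span_zero)
qed

section \<open>The rescaling intertwines the Neveu--Schwarz action\<close>

definition fact_weight :: "(nat \<Rightarrow>\<^sub>0 nat) \<Rightarrow> complex" where
  "fact_weight e = (\<Prod>n\<in>Poly_Mapping.keys e. fact n ^ Poly_Mapping.lookup e n)"

lemma fact_weight_superset:
  "finite K \<Longrightarrow> Poly_Mapping.keys e \<subseteq> K \<Longrightarrow> fact_weight e = (\<Prod>n\<in>K. fact n ^ Poly_Mapping.lookup e n)"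
  unfolding fact_weight_def by (rule prod.mono_neutral_left) (auto simp: in_keys_iff)

lemma fact_weight_add: "fact_weight (a + b) = fact_weight a * fact_weight b"
proof -
  let ?K = "Poly_Mapping.keys a \<union> Poly_Mapping.keys b"
  have "fact_weight (a + b) = (\<Prod>n\<in>?K. fact n ^ Poly_Mapping.lookup (a + b) n)"
    using keys_add[of a b] by (intro fact_weight_superset) auto
  also have "\<dots> = (\<Prod>n\<in>?K. fact n ^ Poly_Mapping.lookup a n) * (\<Prod>n\<in>?K. fact n ^ Poly_Mapping.lookup b n)"
    by (simp add: lookup_add power_add prod.distrib)
  also have "\<dots> = fact_weight a * fact_weight b"
    by (subst (1 2) fact_weight_superset[symmetric]) auto
  finally show ?thesis .
qed

lemma fact_weight_nonzero: "fact_weight e \<noteq> 0"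
  unfolding fact_weight_def by (simp add: prod_zero_iff)

lemma fact_weight_0 [simp]: "fact_weight 0 = 1"
  by (simp add: fact_weight_def)

lemma fact_weight_single [simp]: "fact_weight (Poly_Mapping.single n (Suc 0)) = fact n"
  by (simp add: fact_weight_def)

lemma lookup_Phi_even: "Poly_Mapping.lookup (Phi_even f) e = Poly_Mapping.lookup f e * fact_weight e"
  unfolding Phi_even_def fact_weight_def[symmetric]
  by (simp add: lookup_sum lookup_single when_def in_keys_iff)

lemma Phi_even_add: "Phi_even (f + g) = Phi_even f + Phi_even g"
  by (rule poly_mapping_eqI) (simp add: lookup_Phi_even lookup_add algebra_simps)

lemma Phi_even_0 [simp]: "Phi_even 0 = 0"
  by (rule poly_mapping_eqI) (simp add: lookup_Phi_even)

lemma Phi_even_uminus: "Phi_even (- f) = - Phi_even f"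
  by (rule poly_mapping_eqI) (simp add: lookup_Phi_even)

lemma Phi_even_sum: "Phi_even (sum g A) = (\<Sum>x\<in>A. Phi_even (g x))"
  by (induction A rule: infinite_finite_induct) (auto simp: Phi_even_add)

lemma Phi_even_cconst_mult: "Phi_even (cconst c * f) = cconst c * Phi_even f"
  by (rule poly_mapping_eqI) (simp add: lookup_Phi_even lookup_cconst_mult)

lemma Phi_even_single: "Phi_even (Poly_Mapping.single k c) = Poly_Mapping.single k (c * fact_weight k)"
  by (rule poly_mapping_eqI) (simp add: lookup_Phi_even lookup_single when_def)

lemma Phi_even_eq_0_iff: "Phi_even f = 0 \<longleftrightarrow> f = 0"
  by (metis Phi_even_0 fact_weight_nonzero lookup_Phi_even lookup_zero mult_eq_0_iff poly_mapping_eqI)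

lemma Phi_even_mult: "Phi_even (f * g) = Phi_even f * Phi_even g"
proof -
  have single: "Phi_even (Poly_Mapping.single a c * Poly_Mapping.single b d)
     = Phi_even (Poly_Mapping.single a c) * Phi_even (Poly_Mapping.single b d)" for a b c d
    by (simp add: mult_single Phi_even_single fact_weight_add algebra_simps)
  have "Phi_even (f * g) = Phi_even ((\<Sum>a\<in>Poly_Mapping.keys f. Poly_Mapping.single a (Poly_Mapping.lookup f a))
      * (\<Sum>b\<in>Poly_Mapping.keys g. Poly_Mapping.single b (Poly_Mapping.lookup g b)))"
    by (subst (1 2) poly_mapping_sum_single) simp
  also have "\<dots> = Phi_even (\<Sum>a\<in>Poly_Mapping.keys f. Poly_Mapping.single a (Poly_Mapping.lookup f a))
      * Phi_even (\<Sum>b\<in>Poly_Mapping.keys g. Poly_Mapping.single b (Poly_Mapping.lookup g b))"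
    by (simp add: sum_product Phi_even_sum single)
  finally show ?thesis
    by (simp flip: poly_mapping_sum_single)
qed

lemma Phi_even_1 [simp]: "Phi_even 1 = 1"
  by (rule poly_mapping_eqI) (simp add: lookup_Phi_even lookup_one when_def)

lemma Phi_even_cconst: "Phi_even (cconst c) = cconst c"
  using Phi_even_cconst_mult[of c 1] by simp

lemma Phi_even_evar: "Phi_even (evar n) = cconst (fact n) * evar n"
  by (simp add: evar_def Phi_even_single fact_weight_single cconst_def mult_single)

lemma Phi_even_prod: "Phi_even (prod g A) = (\<Prod>x\<in>A. Phi_even (g x))"
  by (induction A rule: infinite_finite_induct) (auto simp: Phi_even_mult)

lemma lookup_pderiv_e:
  "Poly_Mapping.lookup (pderiv_e n f) e =
     Poly_Mapping.lookup f (e + Poly_Mapping.single n 1) * of_nat (Poly_Mapping.lookup e n + 1)"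
proof -
  have shift: "Poly_Mapping.lookup (Poly_Mapping.single (k - Poly_Mapping.single n 1) (c * of_nat (Poly_Mapping.lookup k n))) e
      = (if k = e + Poly_Mapping.single n 1 then c * of_nat (Poly_Mapping.lookup k n) else 0)"
    for k and c :: complex
  proof (cases "Poly_Mapping.lookup k n = 0")
    case True
    then have "k \<noteq> e + Poly_Mapping.single n 1"
      by (auto simp: lookup_add)
    with True show ?thesis by (simp add: lookup_single)
  next
    case False
    then have "k - Poly_Mapping.single n 1 = e \<longleftrightarrow> k = e + Poly_Mapping.single n 1"
      by (auto simp: poly_mapping_eq_iff fun_eq_iff lookup_minus lookup_add lookup_single when_def)
    then show ?thesis by (simp add: lookup_single when_def)
  qed
  show ?thesis
    unfolding pderiv_e_def lookup_sum shift
    by (simp add: in_keys_iff lookup_add)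
qed

lemma Phi_even_pderiv_e: "Phi_even (pderiv_e n f) = cconst (1 / fact n) * pderiv_e n (Phi_even f)"
  by (rule poly_mapping_eqI)
    (simp add: lookup_Phi_even lookup_cconst_mult lookup_pderiv_e fact_weight_add fact_weight_single)

lemma pderiv_e_cconst_mult: "pderiv_e n (cconst c * f) = cconst c * pderiv_e n f"
  by (rule poly_mapping_eqI) (simp add: lookup_pderiv_e lookup_cconst_mult)

lemma pderiv_e_mult_cconst: "pderiv_e n (f * cconst c) = cconst c * pderiv_e n f"
  using pderiv_e_cconst_mult by (simp add: mult.commute)

lemma prod_fact_nonzero: "(\<Prod>m\<in>S. fact m :: complex) \<noteq> 0"
  by (induction S rule: infinite_finite_induct) auto

lemma Sum_any_additive_inj:
  fixes h :: "'b::comm_monoid_add \<Rightarrow> 'c::comm_monoid_add"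
  assumes add: "\<And>x y. h (x + y) = h x + h y" and zero: "\<And>x. h x = 0 \<longleftrightarrow> x = 0"
  shows "h (Sum_any f) = Sum_any (\<lambda>m. h (f m))"
proof -
  have h0: "h 0 = 0" using zero by simp
  have "h (sum f A) = (\<Sum>m\<in>A. h (f m))" for A
    by (induction A rule: infinite_finite_induct) (auto simp: h0 add)
  moreover have "{m. h (f m) \<noteq> 0} = {m. f m \<noteq> 0}" using zero by auto
  ultimately show ?thesis
    unfolding Sum_any.expand_set by simp
qed

lemma Phi_apply: "Phi Q S = cconst (\<Prod>m\<in>S. fact m) * Phi_even (Q S)"
  by (simp add: Phi_def)

lemma Phi_Sum_any:
  "cconst (\<Prod>m\<in>S. fact m) * Phi_even (Sum_any f) = Sum_any (\<lambda>i. cconst (\<Prod>m\<in>S. fact m) * Phi_even (f i))"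
  by (rule Sum_any_additive_inj)
    (simp_all add: Phi_even_add distrib_left cconst_mult_eq_0_iff prod_fact_nonzero Phi_even_eq_0_iff)

lemma Phi_amode:
  assumes cc: "\<And>k. k > 0 \<Longrightarrow> cc' k = cc k * fact k"
    and ca: "\<And>k. k > 0 \<Longrightarrow> ca' k = ca k / fact k"
  shows "Phi (amode cc ca n Q) = amode cc' ca' n (Phi Q)"
proof (rule ext)
  fix S
  consider "n < 0" | "n > 0" | "n = 0" by linarith
  then show "Phi (amode cc ca n Q) S = amode cc' ca' n (Phi Q) S"
  proof cases
    case 1
    define k where "k = nat (- n)"
    have "cconst (cc' k) = cconst (cc k) * cconst (fact k)"
      using 1 by (simp add: k_def cc flip: cconst_mult)
    with 1 show ?thesis
      by (simp add: amode_def Phi_apply Phi_even_cconst_mult Phi_even_cconst Phi_even_mult Phi_even_evar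
          k_def[symmetric] mult_ac)
  next
    case 2
    define k where "k = nat n"
    have "cconst (ca' k) = cconst (ca k) * cconst (1 / fact k)"
      using 2 by (simp add: k_def ca flip: cconst_mult)
    with 2 show ?thesis
      by (simp add: amode_def Phi_apply Phi_even_cconst_mult Phi_even_pderiv_e pderiv_e_cconst_mult pderiv_e_mult_cconst
          k_def[symmetric] mult_ac)
  qed (simp add: amode_def Phi_apply)
qed

lemma scal_scal: "scal a (scal b Q) = scal (a * b) Q"
  unfolding scal_def by (simp only: cconst_mult mult.assoc)

lemma Phi_scal: "Phi (scal c Q) = scal c (Phi Q)"
  unfolding scal_def by (rule ext) (simp add: Phi_apply Phi_even_cconst_mult mult_ac)

lemma Phi_zero [simp]: "Phi (\<lambda>S. 0) = (\<lambda>S. 0)"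
  by (rule ext) (simp add: Phi_apply)

text \<open>The factor \<Prod>m\<in>S. m! of Phi is multiplicative in S only for finite S, so the odd modes
  are intertwined only on elements vanishing at infinite S.\<close>

definition finite_odd_support :: "spoly \<Rightarrow> bool" where
  "finite_odd_support Q \<longleftrightarrow> (\<forall>S. infinite S \<longrightarrow> Q S = 0)"

lemma Phi_oddmul:
  assumes "finite_odd_support Q"
  shows "Phi (oddmul m Q) = scal (fact m) (oddmul m (Phi Q))"
proof (rule ext)
  fix S
  consider "m \<notin> S" | "m \<in> S" "finite S" | "Q (S - {m}) = 0"
    using assms by (cases "m \<in> S"; cases "finite S") (auto simp: finite_odd_support_def)
  then show "Phi (oddmul m Q) S = scal (fact m) (oddmul m (Phi Q)) S"
  proof cases
    case 2
    then show ?thesis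
      by (intro poly_mapping_eqI)
        (simp add: oddmul_def scal_def Phi_apply Phi_even_cconst_mult lookup_cconst_mult prod.remove)
  qed (simp_all add: oddmul_def scal_def Phi_apply)
qed

lemma Phi_oddder:
  assumes "finite_odd_support Q"
  shows "Phi (oddder m Q) = scal (1 / fact m) (oddder m (Phi Q))"
proof (rule ext)
  fix S
  consider "m \<in> S" | "m \<notin> S" "finite S" | "Q (insert m S) = 0"
    using assms by (cases "m \<in> S"; cases "finite S") (auto simp: finite_odd_support_def)
  then show "Phi (oddder m Q) S = scal (1 / fact m) (oddder m (Phi Q)) S"
  proof cases
    case 2
    then show ?thesis
      by (intro poly_mapping_eqI) (simp add: oddder_def scal_def Phi_apply Phi_even_cconst_mult lookup_cconst_mult)
  qed (simp_all add: oddder_def scal_def Phi_apply)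
qed

lemma finite_odd_support_bmode: "finite_odd_support Q \<Longrightarrow> finite_odd_support (bmode dc dd r Q)"
  by (auto simp: finite_odd_support_def bmode_def scal_def oddmul_def oddder_def)

lemma Phi_bmode:
  assumes "finite_odd_support Q"
    and "\<And>k. dc' k = dc k * fact k" and "\<And>k. dd' k = dd k / fact k"
  shows "Phi (bmode dc dd r Q) = bmode dc' dd' r (Phi Q)"
  using assms by (simp add: bmode_def Phi_scal Phi_oddmul Phi_oddder scal_scal)

lemma finite_odd_support_bR: "finite_odd_support Q \<Longrightarrow> finite_odd_support (bR r Q)"
  unfolding bR_def by (rule finite_odd_support_bmode)

lemma Phi_aR: "Phi (aR n Q) = aF n (Phi Q)"
  unfolding aR_def aF_def
proof (rule Phi_amode)
  fix k :: nat assume "k > 0"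
  then have "fact k = (of_nat k * fact (k - 1) :: complex)"
    by (metis fact_num_eq_if of_nat_eq_0_iff less_not_refl2)
  with \<open>k > 0\<close> show "(-1) ^ (k - 1) * beta / fact (k - 1) = (-1) ^ (k - 1) * beta * of_nat k / fact k"
    by simp
qed simp

lemma Phi_bR: "finite_odd_support Q \<Longrightarrow> Phi (bR r Q) = bF r (Phi Q)"
  unfolding bR_def bF_def by (rule Phi_bmode) simp_all

lemma Phi_uminus: "Phi (- Q) = - Phi Q"
  by (rule ext) (simp add: Phi_apply Phi_even_uminus)

lemma Phi_nord_a: "Phi (nord_a aR m k Q) = nord_a aF m k (Phi Q)"
  by (simp add: nord_a_def Phi_aR)

lemma Phi_nord_b: "finite_odd_support Q \<Longrightarrow> Phi (nord_b bR r s Q) = nord_b bF r s (Phi Q)"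
  by (simp add: nord_b_def Phi_bR finite_odd_support_bR Phi_uminus)

lemma Phi_Lop:
  assumes P: "finite_odd_support P"
  shows "Phi (Lop aR bR n P) = Lop aF bF n (Phi P)"
proof (rule ext)
  fix S
  let ?w = "cconst (\<Prod>m\<in>S. fact m)"
  have a: "?w * Phi_even (nord_a aR m (n - m) P S) = nord_a aF m (n - m) (Phi P) S" for m
    by (metis Phi_apply Phi_nord_a)
  have nb: "?w * Phi_even (nord_b bR r s P S) = nord_b bF r s (Phi P) S" for r s
    by (metis Phi_apply Phi_nord_b[OF P])
  have b: "?w * Phi_even (if r \<in> halfint then cconst (of_rat (of_int n - 2 * r)) * nord_b bR r (of_int n - r) P S else 0)
     = (if r \<in> halfint then cconst (of_rat (of_int n - 2 * r)) * nord_b bF r (of_int n - r) (Phi P) S else 0)" for r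
    by (simp only: Phi_even_cconst_mult mult.left_commute[of ?w] nb split: if_split) simp
  have "Phi (Lop aR bR n P) S
      = cconst (1/2) * (?w * Phi_even (Sum_any (\<lambda>m. nord_a aR m (n - m) P S)))
      + cconst (1/4) * (?w * Phi_even (Sum_any (\<lambda>r. (if r \<in> halfint then
          cconst (of_rat (of_int n - 2 * r)) * nord_b bR r (of_int n - r) P S else 0))))"
    unfolding Lop_def Phi_apply
    by (simp add: Phi_even_add Phi_even_cconst_mult distrib_left mult.left_commute)
  also have "\<dots> = Lop aF bF n (Phi P) S"
    unfolding Lop_def Phi_Sum_any a b ..
  finally show "Phi (Lop aR bR n P) S = Lop aF bF n (Phi P) S" .
qed

lemma Phi_Gop:
  assumes P: "finite_odd_support P"
  shows "Phi (Gop aR bR r P) = Gop aF bF r (Phi P)"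
proof (rule ext)
  fix S
  have "cconst (\<Prod>m\<in>S. fact m) * Phi_even (aR m (bR (r - of_int m) P) S) = aF m (bF (r - of_int m) (Phi P)) S" for m
    using P by (metis Phi_apply Phi_aR Phi_bR)
  then show "Phi (Gop aR bR r P) S = Gop aF bF r (Phi P) S"
    unfolding Gop_def Phi_apply Phi_Sum_any by simp
qed

lemma NS_singular_Phi:
  assumes "finite_odd_support P" "NS_singular aR bR P"
  shows "NS_singular aF bF (Phi P)"
  using assms unfolding NS_singular_def by (metis Phi_Lop Phi_Gop Phi_zero)

section \<open>The rescaling on Schur functions and odd monomials\<close>

lemma fps_nth_power_hom:
  fixes h :: "'a::comm_semiring_1 \<Rightarrow> 'b::comm_semiring_1"
  assumes add: "\<And>x y. h (x + y) = h x + h y" and mult: "\<And>x y. h (x * y) = h x * h y"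
    and "h 0 = 0" "h 1 = 1"
  shows "h (fps_nth (X ^ k) m) = fps_nth (Abs_fps (\<lambda>n. h (fps_nth X n)) ^ k) m"
proof (induction k arbitrary: m)
  case (Suc k)
  have "h (sum g A) = (\<Sum>x\<in>A. h (g x))" for g and A :: "nat set"
    by (induction A rule: infinite_finite_induct) (auto simp: \<open>h 0 = 0\<close> add)
  with Suc show ?case
    by (simp add: fps_mult_nth mult)
qed (simp add: assms(3,4))

lemma Phi_even_exp_coeff:
  "Phi_even (exp_coeff X m) = exp_coeff (Abs_fps (\<lambda>n. Phi_even (fps_nth X n))) m"
  unfolding exp_coeff_def
  by (simp add: Phi_even_sum Phi_even_mult Phi_even_cconst fps_nth_power_hom Phi_even_add)

lemma Phi_even_esym: "Phi_even (esym m) = chern m"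
proof -
  have "Phi_even (cconst ((-1) ^ (n - 1) / of_nat n) * evar n) = cconst ((-1) ^ (n - 1) * fact (n - 1)) * evar n"
    if "n \<noteq> 0" for n
  proof -
    \<comment> \<open>n!/n = (n-1)! turns the generating series of the e_m into that of the Chern classes\<close>
    from that have "fact n = (of_nat n * fact (n - 1) :: complex)"
      by (metis fact_num_eq_if of_nat_eq_0_iff)
    with that have "(-1) ^ (n - 1) / of_nat n * fact n = ((-1) ^ (n - 1) * fact (n - 1) :: complex)"
      by simp
    then show ?thesis
      by (simp add: Phi_even_cconst_mult Phi_even_evar mult.assoc flip: cconst_mult)
  qed
  then have "Abs_fps (\<lambda>n. Phi_even (fps_nth (Abs_fps (\<lambda>n. if n = 0 then 0 else cconst ((-1) ^ (n - 1) / of_nat n) * evar n)) n))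
      = Abs_fps (\<lambda>n. if n = 0 then 0 else cconst ((-1) ^ (n - 1) * fact (n - 1)) * evar n)"
    by (intro fps_ext) simp
  then show ?thesis
    unfolding esym_def chern_def by (simp add: Phi_even_exp_coeff)
qed

lemma Phi_even_detm: "Phi_even (detm k M) = detm k (\<lambda>a b. Phi_even (M a b))"
  unfolding detm_def
  by (simp add: Phi_even_sum Phi_even_mult Phi_even_prod Phi_even_cconst flip: cconst_of_int)

lemma Phi_even_schur: "Phi_even (schur l) = koschorke l"
  unfolding schur_def koschorke_def Phi_even_detm Phi_even_esym ..

lemma oddprod_sorted_list:
  assumes "sorted_wrt (<) xs"
  shows "foldr (\<lambda>j acc. scal (w j) (oddmul j acc)) xs one_s
       = (\<lambda>S. if S = set xs then cconst (\<Prod>j\<in>set xs. w j) else 0)"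
  using assms
proof (induction xs)
  case Nil
  then show ?case by (auto simp: one_s_def)
next
  case (Cons x xs)
  have no_smaller: "{j \<in> set xs. j < x} = {}"
    using Cons.prems by auto
  have xs: "x \<notin> set xs" "qsign x (set xs) = 1"
    using Cons.prems unfolding qsign_def no_smaller by auto
  show ?case
  proof (rule ext)
    fix S
    have "(x \<in> S \<and> S - {x} = set xs) \<longleftrightarrow> S = insert x (set xs)"
      using xs by auto
    with Cons xs show "foldr (\<lambda>j acc. scal (w j) (oddmul j acc)) (x # xs) one_s S =
        (if S = set (x # xs) then cconst (\<Prod>j\<in>set (x # xs). w j) else 0)"
      by (auto simp: scal_def oddmul_def cconst_mult)
  qed
qed

lemma oddprod_eq:
  assumes "finite J"
  shows "oddprod w J = (\<lambda>S. if S = J then cconst (\<Prod>j\<in>J. w j) else 0)"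
proof -
  have "set (sorted_list_of_set J) = J"
    using assms by simp
  then show ?thesis
    by (simp only: oddprod_def oddprod_sorted_list[OF strict_sorted_list_of_set])
qed

section \<open>Schur functions span\<close>

definition exp_deg :: "(nat \<Rightarrow>\<^sub>0 nat) \<Rightarrow> nat" where
  "exp_deg e = (\<Sum>n\<in>Poly_Mapping.keys e. Poly_Mapping.lookup e n)"

definition exp_weight :: "(nat \<Rightarrow>\<^sub>0 nat) \<Rightarrow> nat" where
  "exp_weight e = (\<Sum>n\<in>Poly_Mapping.keys e. n * Poly_Mapping.lookup e n)"

lemma sum_keys_superset:
  fixes g :: "nat \<Rightarrow> nat \<Rightarrow> nat"
  assumes "finite K" "Poly_Mapping.keys e \<subseteq> K" "\<And>n. g n 0 = 0"
  shows "(\<Sum>n\<in>Poly_Mapping.keys e. g n (Poly_Mapping.lookup e n)) = (\<Sum>n\<in>K. g n (Poly_Mapping.lookup e n))"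
  by (rule sum.mono_neutral_left) (use assms in \<open>auto simp: in_keys_iff\<close>)

lemma sum_keys_add:
  fixes g :: "nat \<Rightarrow> nat \<Rightarrow> nat"
  assumes "\<And>n x y. g n (x + y) = g n x + g n y"
  shows "(\<Sum>n\<in>Poly_Mapping.keys (a + b). g n (Poly_Mapping.lookup (a + b) n))
    = (\<Sum>n\<in>Poly_Mapping.keys a. g n (Poly_Mapping.lookup a n)) + (\<Sum>n\<in>Poly_Mapping.keys b. g n (Poly_Mapping.lookup b n))"
proof -
  let ?K = "Poly_Mapping.keys a \<union> Poly_Mapping.keys b"
  have g0: "g n 0 = 0" for n
    using assms[of n 0 0] by simp
  have "(\<Sum>n\<in>Poly_Mapping.keys (a + b). g n (Poly_Mapping.lookup (a + b) n))
      = (\<Sum>n\<in>?K. g n (Poly_Mapping.lookup (a + b) n))"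
    using keys_add[of a b] g0 by (intro sum_keys_superset) auto
  also have "\<dots> = (\<Sum>n\<in>?K. g n (Poly_Mapping.lookup a n)) + (\<Sum>n\<in>?K. g n (Poly_Mapping.lookup b n))"
    by (simp add: lookup_add assms sum.distrib)
  also have "\<dots> = (\<Sum>n\<in>Poly_Mapping.keys a. g n (Poly_Mapping.lookup a n)) + (\<Sum>n\<in>Poly_Mapping.keys b. g n (Poly_Mapping.lookup b n))"
    using g0 by (subst (1 2) sum_keys_superset[of ?K]) auto
  finally show ?thesis .
qed

lemma exp_deg_add: "exp_deg (a + b) = exp_deg a + exp_deg b"
  unfolding exp_deg_def by (rule sum_keys_add[where g = "\<lambda>n x. x"]) simp

lemma exp_weight_add: "exp_weight (a + b) = exp_weight a + exp_weight b"
  unfolding exp_weight_def by (rule sum_keys_add[where g = "\<lambda>n x. n * x"]) (simp add: distrib_left)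

lemma exp_deg_single [simp]: "exp_deg (Poly_Mapping.single v (Suc 0)) = 1"
  by (simp add: exp_deg_def)

lemma exp_weight_single [simp]: "exp_weight (Poly_Mapping.single v (Suc 0)) = v"
  by (simp add: exp_weight_def)

lemma exp_deg_0 [simp]: "exp_deg 0 = 0"
  by (simp add: exp_deg_def)

lemma exp_weight_0 [simp]: "exp_weight 0 = 0"
  by (simp add: exp_weight_def)

lemma exp_weight_pos:
  assumes "e \<noteq> 0" "0 \<notin> Poly_Mapping.keys e"
  shows "exp_weight e \<ge> 1"
proof -
  obtain v where v: "v \<in> Poly_Mapping.keys e"
    using assms(1) by fastforce
  then have "v * Poly_Mapping.lookup e v \<ge> 1"
    using assms(2) by (cases v) (auto simp: in_keys_iff Suc_le_eq)
  moreover have "v * Poly_Mapping.lookup e v \<le> exp_weight e"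
    unfolding exp_weight_def using v by (intro member_le_sum) auto
  ultimately show ?thesis by linarith
qed

lemma split_single:
  fixes e :: "nat \<Rightarrow>\<^sub>0 nat"
  assumes "v \<in> Poly_Mapping.keys e"
  shows "e = Poly_Mapping.single v 1 + (e - Poly_Mapping.single v 1)"
  using assms by (intro poly_mapping_eqI) (auto simp: lookup_add lookup_minus lookup_single when_def in_keys_iff)

lemma keys_minus_single: "Poly_Mapping.keys (e - Poly_Mapping.single v 1) \<subseteq> Poly_Mapping.keys (e :: nat \<Rightarrow>\<^sub>0 nat)"
  by (auto simp: in_keys_iff lookup_minus)

definition esym_coeff :: "nat \<Rightarrow> complex" where
  "esym_coeff n = (-1) ^ (n - 1) / of_nat n"

definition esym_series :: "epoly fps" where
  "esym_series = Abs_fps (\<lambda>n. if n = 0 then 0 else cconst (esym_coeff n) * evar n)"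

lemma esym_exp_coeff: "esym (int m) = exp_coeff esym_series m"
  unfolding esym_def esym_series_def esym_coeff_def by simp

lemma keys_esym_series_power:
  "e \<in> Poly_Mapping.keys (fps_nth (esym_series ^ k) m) \<Longrightarrow>
     exp_deg e = k \<and> exp_weight e = m \<and> 0 \<notin> Poly_Mapping.keys e"
proof (induction k arbitrary: m e)
  case 0
  then show ?case
    by (cases "m = 0") (auto simp: lookup_one in_keys_iff when_def)
next
  case (Suc k)
  have "fps_nth (esym_series ^ Suc k) m = (\<Sum>i=0..m. fps_nth esym_series i * fps_nth (esym_series ^ k) (m - i))"
    by (simp add: fps_mult_nth)
  with Suc.prems obtain i where i: "i \<in> {0..m}"
    and "e \<in> Poly_Mapping.keys (fps_nth esym_series i * fps_nth (esym_series ^ k) (m - i))"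
    using keys_sum by fastforce
  then obtain a b where ab: "e = a + b" "a \<in> Poly_Mapping.keys (fps_nth esym_series i)"
    "b \<in> Poly_Mapping.keys (fps_nth (esym_series ^ k) (m - i))"
    using keys_mult by blast
  have "i \<noteq> 0" and a: "a = Poly_Mapping.single i 1"
    using ab(2) by (auto simp: esym_series_def cconst_mult_evar split: if_splits)
  moreover have "exp_deg b = k \<and> exp_weight b = m - i \<and> 0 \<notin> Poly_Mapping.keys b"
    by (rule Suc.IH[OF ab(3)])
  ultimately show ?case
    using i keys_add[of a b] by (auto simp: ab(1) exp_deg_add exp_weight_add)
qed

definition esym_tail :: "nat \<Rightarrow> epoly" where
  "esym_tail m = (\<Sum>k\<in>{2..m}. cconst (1 / fact k) * fps_nth (esym_series ^ k) m)"

lemma esym_split: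
  assumes "m \<ge> 1"
  shows "esym (int m) = cconst (esym_coeff m) * evar m + esym_tail m"
proof -
  have "{..m} = insert 0 (insert 1 {2..m})"
    using assms by auto
  with assms show ?thesis
    by (simp add: esym_exp_coeff exp_coeff_def esym_tail_def esym_series_def)
qed

lemma keys_esym_tail:
  assumes "e \<in> Poly_Mapping.keys (esym_tail m)"
  shows "exp_deg e \<ge> 2 \<and> exp_weight e = m \<and> 0 \<notin> Poly_Mapping.keys e"
proof -
  obtain k where "k \<in> {2..m}" "e \<in> Poly_Mapping.keys (cconst (1 / fact k) * fps_nth (esym_series ^ k) m)"
    using assms unfolding esym_tail_def using keys_sum by fastforce
  then show ?thesis
    using keys_esym_series_power keys_cconst_mult by fastforce
qed

definition pos_msets :: "nat multiset set" where
  "pos_msets = {M. 0 \<notin># M}"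

definition esym_prod :: "nat multiset \<Rightarrow> epoly" where
  "esym_prod M = (\<Prod>m\<in>#M. esym (int m))"

definition emonom :: "(nat \<Rightarrow>\<^sub>0 nat) \<Rightarrow> epoly" where
  "emonom e = Poly_Mapping.single e 1"

lemma emonom_add: "emonom (a + b) = emonom a * emonom b"
  by (simp add: emonom_def mult_single)

lemma poly_mapping_sum_emonom: "f = (\<Sum>e\<in>Poly_Mapping.keys f. cconst (Poly_Mapping.lookup f e) * emonom e)"
  by (subst poly_mapping_sum_single) (simp add: emonom_def cconst_def mult_single)

lemma esym_prod_span_mult:
  "f \<in> epoly.span (esym_prod ` pos_msets) \<Longrightarrow> g \<in> epoly.span (esym_prod ` pos_msets) \<Longrightarrow>
     f * g \<in> epoly.span (esym_prod ` pos_msets)"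
proof (rule epoly_span_mult)
  fix x y assume "x \<in> esym_prod ` pos_msets" "y \<in> esym_prod ` pos_msets"
  then obtain M N where "M \<in> pos_msets" "N \<in> pos_msets" "x = esym_prod M" "y = esym_prod N"
    by blast
  then show "x * y \<in> esym_prod ` pos_msets"
    by (intro image_eqI[of _ _ "M + N"]) (auto simp: esym_prod_def pos_msets_def)
qed

lemma in_span_if_emonom_in_span:
  "(\<And>e. e \<in> Poly_Mapping.keys f \<Longrightarrow> emonom e \<in> epoly.span S) \<Longrightarrow> f \<in> epoly.span S"
  by (subst poly_mapping_sum_emonom) (intro epoly.span_sum epoly.span_scale)

lemma evar_in_span_esym_prod:
  assumes u: "u \<ge> 1" and tail: "esym_tail u \<in> epoly.span (esym_prod ` pos_msets)"
  shows "evar u \<in> epoly.span (esym_prod ` pos_msets)"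
proof -
  have "esym (int u) \<in> epoly.span (esym_prod ` pos_msets)"
    using u by (intro epoly.span_base image_eqI[of _ _ "{#u#}"]) (auto simp: esym_prod_def pos_msets_def)
  with tail have "cconst (1 / esym_coeff u) * (esym (int u) - esym_tail u) \<in> epoly.span (esym_prod ` pos_msets)"
    by (intro epoly.span_scale epoly.span_diff)
  moreover have "cconst (1 / esym_coeff u) * (esym (int u) - esym_tail u) = evar u"
    using esym_split[OF u] u by (simp add: esym_coeff_def mult.assoc flip: cconst_mult)
  ultimately show ?thesis
    by simp
qed

lemma emonom_in_span_esym_prod:
  "0 \<notin> Poly_Mapping.keys e \<Longrightarrow> emonom e \<in> epoly.span (esym_prod ` pos_msets)"
proof (induction "exp_weight e" arbitrary: e rule: less_induct)
  case less
  let ?E = "epoly.span (esym_prod ` pos_msets)"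
  have composite: "emonom f \<in> ?E"
    if f: "0 \<notin> Poly_Mapping.keys f" "exp_weight f = exp_weight e" "f \<noteq> 0"
      "\<forall>u. f \<noteq> Poly_Mapping.single u 1" for f
  proof -
    obtain u where u: "u \<in> Poly_Mapping.keys f"
      using f(3) by fastforce
    define f' where "f' = f - Poly_Mapping.single u 1"
    have f_eq: "f = Poly_Mapping.single u 1 + f'"
      unfolding f'_def by (rule split_single[OF u])
    have f': "f' \<noteq> 0" "0 \<notin> Poly_Mapping.keys f'"
      using f_eq f(1,4) keys_minus_single unfolding f'_def by auto
    have "u \<noteq> 0"
      using u f(1) by metis
    moreover have "exp_weight f' \<ge> 1" "exp_weight f = u + exp_weight f'"
      using exp_weight_pos[OF f'] f_eq by (auto simp: exp_weight_add)
    ultimately have "emonom (Poly_Mapping.single u 1) \<in> ?E" "emonom f' \<in> ?E"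
      using less.hyps f(2) f'(2) by auto
    then show ?thesis
      using f_eq by (simp add: emonom_add esym_prod_span_mult)
  qed
  consider "e = 0" | u where "e = Poly_Mapping.single u 1" | "e \<noteq> 0" "\<forall>u. e \<noteq> Poly_Mapping.single u 1"
    by blast
  then show ?case
  proof cases
    case 1
    have "esym_prod {#} \<in> ?E"
      by (intro epoly.span_base) (simp add: pos_msets_def)
    with 1 show ?thesis by (simp add: emonom_def esym_prod_def)
  next
    case (2 u)
    then have u: "u \<ge> 1"
      using less.prems by (cases u) auto
    have "esym_tail u \<in> ?E"
    proof (rule in_span_if_emonom_in_span)
      fix f assume "f \<in> Poly_Mapping.keys (esym_tail u)"
      from keys_esym_tail[OF this] 2 show "emonom f \<in> ?E"
        by (intro composite) auto
    qed
    with u have "evar u \<in> ?E"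
      by (rule evar_in_span_esym_prod)
    then show ?thesis
      by (simp add: 2 emonom_def evar_def)
  next
    case 3
    with less.prems show ?thesis by (intro composite) auto
  qed
qed

lemma in_span_esym_prod:
  assumes "\<And>e. e \<in> Poly_Mapping.keys f \<Longrightarrow> 0 \<notin> Poly_Mapping.keys e"
  shows "f \<in> epoly.span (esym_prod ` pos_msets)"
  by (rule in_span_if_emonom_in_span) (simp add: assms emonom_in_span_esym_prod)

text \<open>Row a of the Jacobi--Trudi term of a permutation \<sigma> (rows counted from 0) is the factor
  e with index jt_index l \<sigma> a.  Factors with index 0 are e_0 = 1 and are dropped by jt_support;
  a negative index kills the term, which is recorded by jt_admissible.\<close>

definition jt_index :: "nat list \<Rightarrow> (nat \<Rightarrow> nat) \<Rightarrow> nat \<Rightarrow> int" where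
  "jt_index l \<sigma> a = int (l ! a) + int (\<sigma> a) - int a"

definition jt_admissible :: "nat list \<Rightarrow> (nat \<Rightarrow> nat) \<Rightarrow> bool" where
  "jt_admissible l \<sigma> \<longleftrightarrow> (\<forall>a<length l. jt_index l \<sigma> a \<ge> 0)"

definition jt_support :: "nat list \<Rightarrow> (nat \<Rightarrow> nat) \<Rightarrow> nat set" where
  "jt_support l \<sigma> = {a. a < length l \<and> jt_index l \<sigma> a > 0}"

definition jt_mset :: "nat list \<Rightarrow> (nat \<Rightarrow> nat) \<Rightarrow> nat multiset" where
  "jt_mset l \<sigma> = image_mset (\<lambda>a. nat (jt_index l \<sigma> a)) (mset_set (jt_support l \<sigma>))"

lemma prod_esym_jt_index:
  "(\<Prod>a<length l. esym (jt_index l \<sigma> a)) = (if jt_admissible l \<sigma> then esym_prod (jt_mset l \<sigma>) else 0)"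
proof (cases "jt_admissible l \<sigma>")
  case False
  then obtain a where "a < length l" "jt_index l \<sigma> a < 0"
    by (auto simp: jt_admissible_def not_le)
  with False show ?thesis
    by (simp add: esym_def) (metis finite_lessThan lessThan_iff prod_zero_iff)
next
  case True
  have "(\<Prod>a<length l. esym (jt_index l \<sigma> a)) = (\<Prod>a\<in>jt_support l \<sigma>. esym (jt_index l \<sigma> a))"
  proof (rule prod.mono_neutral_right)
    show "\<forall>i\<in>{..<length l} - jt_support l \<sigma>. esym (jt_index l \<sigma> i) = 1"
    proof
      fix i assume "i \<in> {..<length l} - jt_support l \<sigma>"
      then have "jt_index l \<sigma> i = 0"
        using True by (auto simp: jt_support_def jt_admissible_def)
      then show "esym (jt_index l \<sigma> i) = 1"
        by (simp add: esym_def exp_coeff_def)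
    qed
  qed (auto simp: jt_support_def)
  also have "\<dots> = (\<Prod>a\<in>jt_support l \<sigma>. esym (int (nat (jt_index l \<sigma> a))))"
    by (rule prod.cong) (auto simp: jt_support_def)
  also have "\<dots> = esym_prod (jt_mset l \<sigma>)"
    unfolding esym_prod_def jt_mset_def prod_unfold_prod_mset image_mset.compositionality
    by (simp add: comp_def)
  finally show ?thesis using True by simp
qed

lemma schur_eq_sum_esym_prod:
  "schur l = (\<Sum>\<sigma> | \<sigma> permutes {..<length l}. cconst (of_int (sign \<sigma>)) *
      (if jt_admissible l \<sigma> then esym_prod (jt_mset l \<sigma>) else 0))"
  unfolding schur_def detm_def cconst_of_int
  by (rule sum.cong[OF refl]) (simp add: jt_index_def[symmetric] prod_esym_jt_index)

lemma jt_mset_pos: "jt_mset l \<sigma> \<in> pos_msets"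
  by (auto simp: jt_mset_def pos_msets_def jt_support_def)

lemma partition_nth_mono: "is_partition l \<Longrightarrow> i \<le> j \<Longrightarrow> j < length l \<Longrightarrow> l ! j \<le> l ! i"
  unfolding is_partition_def by (metis le_neq_implies_less order_refl sorted_wrt_nth_less)

lemma mset_conv_nth: "mset l = image_mset (nth l) (mset_set {..<length l})"
  by (metis atLeast0LessThan map_nth mset_map mset_upt)

lemma jt_mset_id:
  assumes "is_partition l"
  shows "jt_admissible l id" "jt_mset l id = mset l"
proof -
  have index: "a < length l \<Longrightarrow> jt_index l id a = int (l ! a)" for a
    by (simp add: jt_index_def)
  show "jt_admissible l id"
    by (simp add: jt_admissible_def index)
  have supp: "jt_support l id = {..<length l}"
    using assms by (auto simp: jt_support_def index is_partition_def)
  show "jt_mset l id = mset l"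
    unfolding jt_mset_def mset_conv_nth supp by (intro image_mset_cong) (simp add: index)
qed

lemma permutes_first_moved:
  fixes \<sigma> :: "nat \<Rightarrow> nat"
  assumes p: "\<sigma> permutes A" and "\<sigma> \<noteq> id"
  obtains a0 where "a0 \<in> A" "a0 < \<sigma> a0" "\<And>a. a < a0 \<Longrightarrow> \<sigma> a = a"
proof -
  define a0 where "a0 = (LEAST a. \<sigma> a \<noteq> a)"
  have "\<exists>a. \<sigma> a \<noteq> a"
    using \<open>\<sigma> \<noteq> id\<close> by auto
  then have a0: "\<sigma> a0 \<noteq> a0"
    unfolding a0_def by (rule LeastI_ex)
  have fixed: "\<sigma> a = a" if "a < a0" for a
    using that not_less_Least unfolding a0_def by blast
  have "a0 < \<sigma> a0"
  proof (rule ccontr)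
    assume "\<not> a0 < \<sigma> a0"
    then have "\<sigma> (\<sigma> a0) = \<sigma> a0"
      using a0 fixed by simp
    then show False
      using a0 permutes_inj[OF p] by (metis injD)
  qed
  moreover have "a0 \<in> A"
    using a0 permutes_not_in[OF p] by blast
  ultimately show ?thesis
    using fixed that by blast
qed

text \<open>The Jacobi--Trudi determinant is unitriangular: every permutation other than the identity
  raises the first index it moves, which makes the multiset of its entries strictly larger.\<close>

lemma jt_mset_greater:
  assumes l: "is_partition l" and p: "\<sigma> permutes {..<length l}" and "\<sigma> \<noteq> id"
  shows "mset l < jt_mset l \<sigma>"
proof -
  let ?k = "length l"
  obtain a0 where "a0 \<in> {..<?k}" "a0 < \<sigma> a0" and fixed: "\<And>a. a < a0 \<Longrightarrow> \<sigma> a = a"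
    using permutes_first_moved[OF p \<open>\<sigma> \<noteq> id\<close>] by blast
  then have a0k: "a0 < ?k"
    by simp
  from \<open>a0 < \<sigma> a0\<close> have index_a0: "jt_index l \<sigma> a0 > int (l ! a0)"
    by (simp add: jt_index_def)
  have index_low: "a < a0 \<Longrightarrow> jt_index l \<sigma> a = int (l ! a)" for a
    using fixed by (simp add: jt_index_def)
  define A where "A = image_mset (nth l) (mset_set {..<a0})"
  define L where "L = image_mset (nth l) (mset_set {a0..<?k})"
  define M where "M = image_mset (\<lambda>a. nat (jt_index l \<sigma> a)) (mset_set (jt_support l \<sigma> \<inter> {a0..<?k}))"
  have k_split: "{..<?k} = {..<a0} \<union> {a0..<?k}"
    using a0k by auto
  have ml: "mset l = A + L"
    unfolding mset_conv_nth A_def L_def k_split by (subst mset_set_Union) auto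
  have supp_split: "jt_support l \<sigma> = {..<a0} \<union> (jt_support l \<sigma> \<inter> {a0..<?k})"
    using a0k l index_low by (auto simp: jt_support_def is_partition_def)
  have "image_mset (\<lambda>a. nat (jt_index l \<sigma> a)) (mset_set {..<a0}) = A"
    unfolding A_def by (rule image_mset_cong) (simp add: index_low)
  then have ms: "jt_mset l \<sigma> = A + M"
    unfolding jt_mset_def M_def by (subst supp_split, subst mset_set_Union) (auto simp: jt_support_def)
  have "L < M"
  proof (rule ex_gt_imp_less_multiset)
    have "a0 \<in> jt_support l \<sigma> \<inter> {a0..<?k}" using a0k index_a0 by (simp add: jt_support_def)
    then have "nat (jt_index l \<sigma> a0) \<in># M" unfolding M_def by auto
    moreover have "x < nat (jt_index l \<sigma> a0)" if "x \<in># L" for x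
    proof -
      from that obtain a where "a \<in> {a0..<?k}" "x = l ! a" unfolding L_def by auto
      then have "x \<le> l ! a0" using partition_nth_mono[OF l] by auto
      then show ?thesis using index_a0 by linarith
    qed
    ultimately show "\<exists>y. y \<in># M \<and> (\<forall>x. x \<in># L \<longrightarrow> x < y)" by blast
  qed
  then show ?thesis unfolding ml ms by simp
qed

lemma sum_mset_jt_mset:
  assumes p: "\<sigma> permutes {..<length l}" and adm: "jt_admissible l \<sigma>"
  shows "sum_mset (jt_mset l \<sigma>) = sum_mset (mset l)"
proof -
  let ?k = "length l"
  have "sum_mset (jt_mset l \<sigma>) = (\<Sum>a\<in>jt_support l \<sigma>. nat (jt_index l \<sigma> a))"
    unfolding jt_mset_def by (simp add: sum_unfold_sum_mset)
  also have "\<dots> = (\<Sum>a<?k. nat (jt_index l \<sigma> a))"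
    by (rule sum.mono_neutral_left) (use adm in \<open>auto simp: jt_support_def jt_admissible_def\<close>)
  finally have "int (sum_mset (jt_mset l \<sigma>)) = (\<Sum>a<?k. jt_index l \<sigma> a)"
    using adm by (simp add: jt_admissible_def)
  also have "\<dots> = (\<Sum>a<?k. int (l ! a))"
    using sum.permute[OF p, of int] by (simp add: jt_index_def sum.distrib sum_subtractf comp_def)
  also have "\<dots> = int (\<Sum>a<?k. l ! a)"
    by simp
  also have "(\<Sum>a<?k. l ! a) = sum_mset (mset l)"
    by (simp add: sum_mset_sum_list sum_list_sum_nth atLeast0LessThan)
  finally show ?thesis by (simp only: of_nat_eq_iff)
qed

lemma schur_unitriangular:
  assumes l: "is_partition l"
  shows "schur l = esym_prod (mset l)
    + (\<Sum>\<sigma>\<in>{\<sigma>. \<sigma> permutes {..<length l} \<and> \<sigma> \<noteq> id \<and> jt_admissible l \<sigma>}.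
         cconst (of_int (sign \<sigma>)) * esym_prod (jt_mset l \<sigma>))"
proof -
  let ?P = "{\<sigma>. \<sigma> permutes {..<length l}}"
  let ?T = "\<lambda>\<sigma>. cconst (of_int (sign \<sigma>)) * (if jt_admissible l \<sigma> then esym_prod (jt_mset l \<sigma>) else 0)"
  have fin: "finite ?P" using finite_permutations[of "{..<length l}"] by simp
  have "schur l = ?T id + (\<Sum>\<sigma>\<in>?P - {id}. ?T \<sigma>)"
    unfolding schur_eq_sum_esym_prod by (rule sum.remove[OF fin]) (simp add: permutes_id)
  also have "?T id = esym_prod (mset l)"
    using jt_mset_id[OF l] by (simp add: sign_id)
  also have "(\<Sum>\<sigma>\<in>?P - {id}. ?T \<sigma>) = (\<Sum>\<sigma>\<in>?P - {id}.
      if jt_admissible l \<sigma> then cconst (of_int (sign \<sigma>)) * esym_prod (jt_mset l \<sigma>) else 0)"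
    by (rule sum.cong) auto
  also have "\<dots> = (\<Sum>\<sigma>\<in>{\<sigma>\<in>?P - {id}. jt_admissible l \<sigma>}. cconst (of_int (sign \<sigma>)) * esym_prod (jt_mset l \<sigma>))"
    using fin by (intro sum.inter_filter[symmetric]) auto
  also have "{\<sigma>\<in>?P - {id}. jt_admissible l \<sigma>} = {\<sigma>. \<sigma> permutes {..<length l} \<and> \<sigma> \<noteq> id \<and> jt_admissible l \<sigma>}"
    by auto
  finally show ?thesis .
qed

lemma partition_eq_if_mset_eq:
  assumes "is_partition l" "is_partition l'" "mset l = mset l'"
  shows "l = l'"
proof -
  have "sorted (rev l)" "sorted (rev l')"
    using assms(1,2) by (simp_all add: is_partition_def sorted_wrt_rev)
  with assms(3) show ?thesis
    by (metis mset_rev properties_for_sort rev_rev_ident)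
qed

lemma partition_of_pos_mset:
  "M \<in> pos_msets \<Longrightarrow> is_partition (rev (sorted_list_of_multiset M))"
  by (auto simp: is_partition_def sorted_wrt_rev pos_msets_def intro: gr0I)

definition higher_pos_msets :: "nat multiset \<Rightarrow> nat multiset set" where
  "higher_pos_msets M = {N \<in> pos_msets. sum_mset N = sum_mset M \<and> M < N}"

lemma finite_higher_pos_msets: "finite (higher_pos_msets M)"
proof (rule finite_subset)
  have "size N \<le> sum_mset N" if "N \<in> pos_msets" for N :: "nat multiset"
    using that by (induction N) (auto simp: pos_msets_def)
  moreover have "x \<le> sum_mset N" if "x \<in># N" for x and N :: "nat multiset"
    using that by (induction N) auto
  ultimately show "higher_pos_msets M \<subseteq> (\<Union>n\<in>{..sum_mset M}. multisets_of_size {..sum_mset M} n)"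
    by (fastforce simp: higher_pos_msets_def multisets_of_size_def)
qed auto

lemma higher_pos_msets_psubset:
  assumes "N \<in> higher_pos_msets M"
  shows "higher_pos_msets N \<subset> higher_pos_msets M"
  using assms by (auto simp: higher_pos_msets_def)

lemma esym_prod_in_span_schur:
  "M \<in> pos_msets \<Longrightarrow> esym_prod M \<in> epoly.span (schur ` {l. is_partition l})"
proof (induction "card (higher_pos_msets M)" arbitrary: M rule: less_induct)
  case less
  define l where "l = rev (sorted_list_of_multiset M)"
  have l: "is_partition l" "mset l = M"
    using partition_of_pos_mset[OF less.prems] by (simp_all add: l_def)
  let ?T = "{\<sigma>. \<sigma> permutes {..<length l} \<and> \<sigma> \<noteq> id \<and> jt_admissible l \<sigma>}"
  have "jt_mset l \<sigma> \<in> higher_pos_msets M" if "\<sigma> \<in> ?T" for \<sigma>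
    using that jt_mset_greater[OF l(1)] sum_mset_jt_mset jt_mset_pos
    by (auto simp: higher_pos_msets_def l(2)[symmetric])
  then have "esym_prod (jt_mset l \<sigma>) \<in> epoly.span (schur ` {l. is_partition l})" if "\<sigma> \<in> ?T" for \<sigma>
    using that by (intro less.hyps jt_mset_pos psubset_card_mono finite_higher_pos_msets
        higher_pos_msets_psubset)
  moreover have "schur l \<in> epoly.span (schur ` {l. is_partition l})"
    using l(1) by (intro epoly.span_base) simp
  ultimately have "schur l - (\<Sum>\<sigma>\<in>?T. cconst (of_int (sign \<sigma>)) * esym_prod (jt_mset l \<sigma>))
      \<in> epoly.span (schur ` {l. is_partition l})"
    by (intro epoly.span_diff epoly.span_sum epoly.span_scale)
  then show ?case
    using schur_unitriangular[OF l(1)] l(2) by simp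
qed

lemma in_span_schur:
  assumes "\<And>e. e \<in> Poly_Mapping.keys f \<Longrightarrow> 0 \<notin> Poly_Mapping.keys e"
  shows "f \<in> epoly.span (schur ` {l. is_partition l})"
proof -
  have "epoly.span (esym_prod ` pos_msets) \<subseteq> epoly.span (schur ` {l. is_partition l})"
    by (rule epoly.span_minimal) (auto intro: esym_prod_in_span_schur)
  with in_span_esym_prod[OF assms] show ?thesis by blast
qed

section \<open>Schur functions are independent\<close>

definition lowest_term :: "epoly \<Rightarrow> (nat \<Rightarrow>\<^sub>0 nat) \<Rightarrow> complex \<Rightarrow> bool" where
  "lowest_term f A c \<longleftrightarrow> Poly_Mapping.lookup f A = c \<and> c \<noteq> 0
     \<and> (\<forall>e\<in>Poly_Mapping.keys f. e \<noteq> A \<longrightarrow> exp_deg e > exp_deg A)"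

lemma lookup_eq_0_if_deg_less:
  "\<forall>e\<in>Poly_Mapping.keys h. exp_deg e > n \<Longrightarrow> exp_deg a \<le> n \<Longrightarrow> Poly_Mapping.lookup h a = 0"
  by (metis in_keys_iff not_le)

lemma lowest_term_mult:
  assumes f: "lowest_term f A c" and g: "lowest_term g B d"
  shows "lowest_term (f * g) (A + B) (c * d)"
proof -
  have fk: "\<forall>a\<in>Poly_Mapping.keys f. exp_deg a \<ge> exp_deg A"
    using f unfolding lowest_term_def by (metis order.strict_implies_order order_refl)
  have gk: "\<forall>a\<in>Poly_Mapping.keys g. exp_deg a \<ge> exp_deg B"
    using g unfolding lowest_term_def by (metis order.strict_implies_order order_refl)
  define f1 where "f1 = f - Poly_Mapping.single A c"
  define g1 where "g1 = g - Poly_Mapping.single B d"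
  have f1k: "\<forall>e\<in>Poly_Mapping.keys f1. exp_deg e > exp_deg A"
    using f unfolding f1_def lowest_term_def
    by (auto simp: in_keys_iff lookup_minus lookup_single when_def split: if_splits)
  have g1k: "\<forall>e\<in>Poly_Mapping.keys g1. exp_deg e > exp_deg B"
    using g unfolding g1_def lowest_term_def
    by (auto simp: in_keys_iff lookup_minus lookup_single when_def split: if_splits)
  have fg: "f * g = Poly_Mapping.single (A + B) (c * d) + (Poly_Mapping.single A c * g1 + f1 * g)"
    unfolding f1_def g1_def by (simp add: algebra_simps mult_single)
  have k1: "\<forall>e\<in>Poly_Mapping.keys (Poly_Mapping.single A c * g1). exp_deg e > exp_deg (A + B)"
    using keys_mult[of "Poly_Mapping.single A c" g1] g1k
    by (auto simp: exp_deg_add split: if_splits)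
  have k2: "\<forall>e\<in>Poly_Mapping.keys (f1 * g). exp_deg e > exp_deg (A + B)"
  proof
    fix e assume "e \<in> Poly_Mapping.keys (f1 * g)"
    then obtain a b where "e = a + b" "a \<in> Poly_Mapping.keys f1" "b \<in> Poly_Mapping.keys g"
      using keys_mult by blast
    then show "exp_deg e > exp_deg (A + B)"
      using f1k gk by (fastforce simp: exp_deg_add)
  qed
  have "Poly_Mapping.lookup (f * g) (A + B) = c * d"
    unfolding fg lookup_add using lookup_eq_0_if_deg_less[OF k1, of "A + B"]
      lookup_eq_0_if_deg_less[OF k2, of "A + B"] by simp
  moreover have "c * d \<noteq> 0"
    using f g by (simp add: lowest_term_def)
  moreover have "exp_deg e > exp_deg (A + B)" if e: "e \<in> Poly_Mapping.keys (f * g)" "e \<noteq> A + B" for e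
  proof -
    obtain a b where ab: "e = a + b" "a \<in> Poly_Mapping.keys f" "b \<in> Poly_Mapping.keys g"
      using e(1) keys_mult by blast
    then have "a \<noteq> A \<or> b \<noteq> B"
      using e(2) by auto
    then show ?thesis
      using ab f g fk gk unfolding lowest_term_def by (fastforce simp: exp_deg_add)
  qed
  ultimately show ?thesis
    by (simp add: lowest_term_def)
qed

lemma lowest_term_esym:
  assumes "m \<ge> 1"
  shows "lowest_term (esym (int m)) (Poly_Mapping.single m 1) (esym_coeff m)"
proof -
  have tail: "\<forall>e\<in>Poly_Mapping.keys (esym_tail m). exp_deg e > 1"
    using keys_esym_tail by fastforce
  then have "Poly_Mapping.lookup (esym_tail m) (Poly_Mapping.single m 1) = 0"
    by (intro lookup_eq_0_if_deg_less) auto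
  moreover have "e \<in> Poly_Mapping.keys (esym_tail m)"
    if "e \<in> Poly_Mapping.keys (cconst (esym_coeff m) * evar m + esym_tail m)" "e \<noteq> Poly_Mapping.single m 1" for e
    using that keys_add[of "cconst (esym_coeff m) * evar m" "esym_tail m"]
    by (auto simp: cconst_mult_evar split: if_splits)
  ultimately show ?thesis
    using assms tail unfolding lowest_term_def esym_split[OF assms]
    by (auto simp: lookup_add cconst_mult_evar esym_coeff_def)
qed

definition mset_exponent :: "nat multiset \<Rightarrow> (nat \<Rightarrow>\<^sub>0 nat)" where
  "mset_exponent M = (\<Sum>m\<in>#M. Poly_Mapping.single m 1)"

lemma lookup_mset_exponent: "Poly_Mapping.lookup (mset_exponent M) v = count M v"
  by (induction M) (auto simp: mset_exponent_def lookup_add lookup_single when_def)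

lemma mset_exponent_inject: "mset_exponent M = mset_exponent N \<longleftrightarrow> M = N"
  by (metis lookup_mset_exponent multiset_eqI)

lemma exp_deg_mset_exponent: "exp_deg (mset_exponent M) = size M"
  by (induction M) (auto simp: mset_exponent_def exp_deg_add)

lemma lowest_term_esym_prod:
  "M \<in> pos_msets \<Longrightarrow> lowest_term (esym_prod M) (mset_exponent M) (\<Prod>m\<in>#M. esym_coeff m)"
proof (induction M)
  case empty
  then show ?case
    by (simp add: esym_prod_def mset_exponent_def lowest_term_def lookup_one)
next
  case (add x M)
  then have "x \<ge> 1" "M \<in> pos_msets"
    by (auto simp: pos_msets_def)
  then show ?case
    using lowest_term_mult[OF lowest_term_esym add.IH]
    by (simp add: esym_prod_def mset_exponent_def)
qed

lemma lookup_esym_prod_mset_exponent: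
  assumes "N \<in> pos_msets" "N \<noteq> M" "size M \<le> size N"
  shows "Poly_Mapping.lookup (esym_prod N) (mset_exponent M) = 0"
  using lowest_term_esym_prod[OF assms(1)] assms(2,3) unfolding lowest_term_def
  by (metis exp_deg_mset_exponent in_keys_iff mset_exponent_inject not_le)

text \<open>Among the multisets with nonzero total coefficient, take M0 of minimal size: the monomial
  of M0 is the lowest term of esym_prod M0 and occurs in no other esym_prod N.\<close>

lemma esym_prod_indep:
  assumes I: "finite I" and pos: "\<And>i. i \<in> I \<Longrightarrow> N i \<in> pos_msets"
    and zero: "(\<Sum>i\<in>I. cconst (c i) * esym_prod (N i)) = 0"
  shows "(\<Sum>i\<in>{i\<in>I. N i = M}. c i) = 0"
proof (rule ccontr)
  define C where "C M = (\<Sum>i\<in>{i\<in>I. N i = M}. c i)" for M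
  define T where "T = {M \<in> N ` I. C M \<noteq> 0}"
  assume "(\<Sum>i\<in>{i\<in>I. N i = M}. c i) \<noteq> 0"
  then have "{i\<in>I. N i = M} \<noteq> {}" "C M \<noteq> 0"
    unfolding C_def by (metis sum.empty, simp)
  then have "M \<in> T"
    by (auto simp: T_def)
  moreover have "finite T"
    using I by (simp add: T_def)
  ultimately obtain M0 where M0: "M0 \<in> T" "\<And>M. M \<in> T \<Longrightarrow> size M0 \<le> size M"
    by (metis (mono_tags, lifting) arg_min_if_finite empty_iff not_le)
  then have M0I: "M0 \<in> N ` I" and M0pos: "M0 \<in> pos_msets"
    using pos by (auto simp: T_def)
  have other: "C M * Poly_Mapping.lookup (esym_prod M) (mset_exponent M0) = 0"
    if M: "M \<in> N ` I" "M \<noteq> M0" for M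
  proof (cases "C M = 0")
    case False
    with M M0(2) pos show ?thesis
      by (auto simp: T_def lookup_esym_prod_mset_exponent)
  qed simp
  have "(\<Sum>i\<in>I. cconst (c i) * esym_prod (N i))
      = (\<Sum>M\<in>N ` I. \<Sum>i\<in>{i\<in>I. N i = M}. cconst (c i) * esym_prod (N i))"
    by (rule sum.image_gen[OF I])
  also have "\<dots> = (\<Sum>M\<in>N ` I. cconst (C M) * esym_prod M)"
    by (rule sum.cong[OF refl]) (simp add: C_def cconst_sum sum_distrib_right)
  finally have "0 = Poly_Mapping.lookup (\<Sum>M\<in>N ` I. cconst (C M) * esym_prod M) (mset_exponent M0)"
    using zero by simp
  also have "\<dots> = (\<Sum>M\<in>N ` I. C M * Poly_Mapping.lookup (esym_prod M) (mset_exponent M0))"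
    by (simp add: lookup_sum lookup_cconst_mult)
  also have "\<dots> = C M0 * Poly_Mapping.lookup (esym_prod M0) (mset_exponent M0)"
    using I M0I other by (simp add: sum.remove[of _ M0] sum.neutral)
  also have "\<dots> = C M0 * (\<Prod>m\<in>#M0. esym_coeff m)"
    using lowest_term_esym_prod[OF M0pos] by (simp add: lowest_term_def)
  finally show False
    using M0(1) lowest_term_esym_prod[OF M0pos] by (simp add: T_def lowest_term_def)
qed

lemma sum_schur_eq_sum_esym_prod:
  assumes "finite F"
  shows "(\<Sum>l\<in>F. cconst (a l) * schur l) = (\<Sum>(l, \<sigma>)\<in>Sigma F (\<lambda>l. {\<sigma>. \<sigma> permutes {..<length l}}).
     cconst (a l * of_int (sign \<sigma>) * (if jt_admissible l \<sigma> then 1 else 0)) * esym_prod (jt_mset l \<sigma>))"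
proof -
  have "cconst (a l) * (cconst (of_int (sign \<sigma>)) * (if jt_admissible l \<sigma> then esym_prod (jt_mset l \<sigma>) else 0))
      = cconst (a l * of_int (sign \<sigma>) * (if jt_admissible l \<sigma> then 1 else 0)) * esym_prod (jt_mset l \<sigma>)"
    for l \<sigma>
    by (cases "jt_admissible l \<sigma>") (simp_all only: if_True if_False cconst_mult mult.assoc
        mult_zero_right mult_1_right cconst_0 mult_zero_left)
  moreover have "finite {\<sigma>. \<sigma> permutes {..<length l}}" for l :: "nat list"
    using finite_permutations[of "{..<length l}"] by simp
  ultimately show ?thesis
    unfolding schur_eq_sum_esym_prod sum_distrib_left using assms by (simp add: sum.Sigma)
qed

lemma jt_mset_eq_minimal:
  assumes "is_partition l" "is_partition l0" "\<sigma> permutes {..<length l}"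
    and "jt_mset l \<sigma> = mset l0" "mset l0 \<le> mset l"
  shows "l = l0 \<and> \<sigma> = id"
proof (cases "\<sigma> = id")
  case True
  with assms show ?thesis
    using jt_mset_id(2) partition_eq_if_mset_eq by metis
next
  case False
  with assms show ?thesis
    using jt_mset_greater[of l \<sigma>] by simp
qed

text \<open>A partition l0 of minimal multiset in the support contributes esym_prod (mset l0) with
  coefficient a l0, and by unitriangularity no other term of the expansion produces it.\<close>

lemma schur_indep:
  assumes fin: "finite {l. a l \<noteq> 0}" and part: "\<forall>l. a l \<noteq> 0 \<longrightarrow> is_partition l"
    and zero: "Sum_any (\<lambda>l. cconst (a l) * schur l) = 0"
  shows "a l = 0"
proof (rule ccontr)
  define F where "F = {l. a l \<noteq> 0}"
  assume "a l \<noteq> 0"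
  then have "Min (mset ` F) \<in> mset ` F"
    using fin by (intro Min_in) (auto simp: F_def)
  then obtain l0 where l0: "l0 \<in> F" "mset l0 = Min (mset ` F)"
    by auto
  then have l0_min: "mset l0 \<le> mset l'" if "l' \<in> F" for l'
    using fin that by (simp add: F_def)
  have l0p: "is_partition l0"
    using l0(1) part by (simp add: F_def)
  define I where "I = Sigma F (\<lambda>l. {\<sigma>. \<sigma> permutes {..<length l}})"
  define c where "c = (\<lambda>(l, \<sigma>). a l * of_int (sign \<sigma>) * (if jt_admissible l \<sigma> then 1 else (0::complex)))"
  define N where "N = (\<lambda>(l, \<sigma>). jt_mset l \<sigma>)"
  have finI: "finite I"
    using fin finite_permutations by (auto simp: I_def F_def)
  have "(\<Sum>i\<in>I. cconst (c i) * esym_prod (N i)) = (\<Sum>l\<in>F. cconst (a l) * schur l)"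
    unfolding sum_schur_eq_sum_esym_prod[OF fin[folded F_def]] I_def c_def N_def
    by (rule sum.cong) auto
  also have "\<dots> = 0"
    using zero fin by (subst (asm) Sum_any.expand_superset[of F]) (auto simp: F_def)
  finally have grouped: "(\<Sum>i\<in>{i\<in>I. N i = mset l0}. c i) = 0"
    using finI by (intro esym_prod_indep) (auto simp: N_def jt_mset_pos)
  have others: "c i = 0" if i: "i \<in> {i\<in>I. N i = mset l0} - {(l0, id)}" for i
  proof -
    obtain l' \<sigma> where i_eq: "i = (l', \<sigma>)"
      by fastforce
    have "l' \<in> F" "\<sigma> permutes {..<length l'}" "jt_mset l' \<sigma> = mset l0" "is_partition l'"
      using i part by (auto simp: i_eq I_def N_def F_def)
    with jt_mset_eq_minimal[OF _ l0p] l0_min i show ?thesis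
      by (auto simp: i_eq c_def)
  qed
  have "(l0, id) \<in> {i\<in>I. N i = mset l0}"
    using l0(1) jt_mset_id[OF l0p] by (simp add: I_def N_def permutes_id)
  then have "(\<Sum>i\<in>{i\<in>I. N i = mset l0}. c i)
      = c (l0, id) + (\<Sum>i\<in>{i\<in>I. N i = mset l0} - {(l0, id)}. c i)"
    using finI by (intro sum.remove) auto
  also have "(\<Sum>i\<in>{i\<in>I. N i = mset l0} - {(l0, id)}. c i) = 0"
    using others by (intro sum.neutral) blast
  finally have "c (l0, id) = 0"
    using grouped by (simp add: id_def)
  then show False
    using jt_mset_id[OF l0p] l0(1) by (simp add: c_def sign_id F_def)
qed

section \<open>The Schur expansion\<close>

lemma Sum_any_scal_oddprod:
  assumes "\<forall>l J. a l J \<noteq> 0 \<longrightarrow> finite J"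
  shows "Sum_any (\<lambda>(l, J). scal (a l J) (\<lambda>S. B l * oddprod w J S) S)
       = Sum_any (\<lambda>l. cconst (a l S) * (B l * cconst (\<Prod>j\<in>S. w j)))"
proof -
  have "Sum_any (\<lambda>(l, J). scal (a l J) (\<lambda>S. B l * oddprod w J S) S)
      = Sum_any (\<lambda>(l, J). cconst (a l S) * (B l * cconst (\<Prod>j\<in>S. w j)) when J = S)"
  proof (rule Sum_any.cong)
    fix x :: "'a \<times> nat set"
    obtain l J where x: "x = (l, J)"
      by fastforce
    show "(case x of (l, J) \<Rightarrow> scal (a l J) (\<lambda>S. B l * oddprod w J S) S)
        = (case x of (l, J) \<Rightarrow> cconst (a l S) * (B l * cconst (\<Prod>j\<in>S. w j)) when J = S)"
    proof (cases "a l J = 0")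
      case False
      with assms have "finite J"
        by blast
      then show ?thesis
        by (auto simp: x scal_def oddprod_eq when_def)
    qed (auto simp: x scal_def when_def)
  qed
  also have "\<dots> = Sum_any (\<lambda>l. cconst (a l S) * (B l * cconst (\<Prod>j\<in>S. w j)))"
    by (rule Sum_any_when_dependent_prod_right)
  finally show ?thesis .
qed

lemma schur_expansion_iff:
  "schur_expansion a P \<longleftrightarrow> finite {(l, J). a l J \<noteq> 0}
     \<and> (\<forall>l J. a l J \<noteq> 0 \<longrightarrow> is_partition l \<and> finite J)
     \<and> (\<forall>S. P S = Sum_any (\<lambda>l. cconst (a l S) * schur l))"
proof -
  have "Sum_any (\<lambda>(l, J). scal (a l J) (schur_q l J) S) = Sum_any (\<lambda>l. cconst (a l S) * schur l)"
    if "\<forall>l J. a l J \<noteq> 0 \<longrightarrow> is_partition l \<and> finite J" for S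
    using that Sum_any_scal_oddprod[of a schur "\<lambda>_. 1" S] unfolding schur_q_def by simp
  then show ?thesis
    unfolding schur_expansion_def fun_eq_iff by auto
qed

lemma finite_slice:
  assumes "finite {(l, J). a l J \<noteq> 0}"
  shows "finite {l. a l S \<noteq> 0}"
proof (rule finite_subset)
  show "{l. a l S \<noteq> 0} \<subseteq> fst ` {(l, J). a l J \<noteq> 0}"
    by force
qed (use assms in simp)

lemma schur_expansion_unique:
  assumes "schur_expansion a P" "schur_expansion b P"
  shows "a = b"
proof (intro ext)
  fix l J
  have fin: "finite {l. a l J \<noteq> 0}" "finite {l. b l J \<noteq> 0}"
    and part: "\<forall>l. a l J \<noteq> 0 \<longrightarrow> is_partition l" "\<forall>l. b l J \<noteq> 0 \<longrightarrow> is_partition l"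
    and eq: "P J = Sum_any (\<lambda>l. cconst (a l J) * schur l)" "P J = Sum_any (\<lambda>l. cconst (b l J) * schur l)"
    using assms unfolding schur_expansion_iff by (auto intro: finite_slice)
  have "Sum_any (\<lambda>l. cconst (a l J - b l J) * schur l) = 0"
    using eq epoly.Sum_any_scale_diff[OF fin, of schur] by simp
  moreover have "finite {l. a l J - b l J \<noteq> 0}"
    by (rule finite_subset[OF _ finite_UnI[OF fin]]) auto
  moreover have "\<forall>l. a l J - b l J \<noteq> 0 \<longrightarrow> is_partition l"
    using part by (metis diff_self)
  ultimately have "a l J - b l J = 0"
    by (intro schur_indep)
  then show "a l J = b l J"
    by simp
qed

lemma schur_expansion_exists:
  assumes "wf_spoly P"
  shows "\<exists>a. schur_expansion a P"
proof -
  have "\<forall>S. \<exists>b. finite {l. b l \<noteq> 0} \<and> (\<forall>l. b l \<noteq> 0 \<longrightarrow> is_partition l)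
      \<and> P S = Sum_any (\<lambda>l. cconst (b l) * schur l)"
  proof
    fix S
    have "P S \<in> epoly.span (schur ` {l. is_partition l})"
      using assms by (intro in_span_schur) (auto simp: wf_spoly_def in_keys_iff)
    then show "\<exists>b. finite {l. b l \<noteq> 0} \<and> (\<forall>l. b l \<noteq> 0 \<longrightarrow> is_partition l)
        \<and> P S = Sum_any (\<lambda>l. cconst (b l) * schur l)"
      by (auto dest!: epoly.span_image_Sum_any)
  qed
  from choice[OF this] obtain b where b: "\<forall>S. finite {l. b S l \<noteq> 0}
      \<and> (\<forall>l. b S l \<noteq> 0 \<longrightarrow> is_partition l) \<and> P S = Sum_any (\<lambda>l. cconst (b S l) * schur l)"
    by blast
  define a where "a l J = (if P J = 0 then 0 else b J l)" for l J
  have "{(l, J). a l J \<noteq> 0} \<subseteq> (\<Union>J\<in>{J. P J \<noteq> 0}. {l. b J l \<noteq> 0} \<times> {J})"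
    by (auto simp: a_def split: if_splits)
  moreover have "finite (\<Union>J\<in>{J. P J \<noteq> 0}. {l. b J l \<noteq> 0} \<times> {J})"
    using assms b by (simp add: wf_spoly_def)
  ultimately have "finite {(l, J). a l J \<noteq> 0}"
    by (rule finite_subset)
  moreover have "is_partition l \<and> finite J" if "a l J \<noteq> 0" for l J
  proof
    from that have "P J \<noteq> 0" "b J l \<noteq> 0"
      by (auto simp: a_def split: if_splits)
    with assms b show "is_partition l" "finite J"
      by (simp_all add: wf_spoly_def)
  qed
  moreover have "P S = Sum_any (\<lambda>l. cconst (a l S) * schur l)" for S
  proof (cases "P S = 0")
    case False
    with b show ?thesis by (simp add: a_def)
  qed (simp add: a_def)
  ultimately show ?thesis
    unfolding schur_expansion_iff by blast
qed

lemma Phi_schur_expansion: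
  assumes "schur_expansion a P"
  shows "Phi P = (\<lambda>S. Sum_any (\<lambda>(l, J). scal (a l J) (class_F l J) S))"
proof (rule ext)
  fix S
  have supp: "\<forall>l J. a l J \<noteq> 0 \<longrightarrow> finite J"
    and P: "P S = Sum_any (\<lambda>l. cconst (a l S) * schur l)"
    using assms unfolding schur_expansion_iff by auto
  have "Phi P S = Sum_any (\<lambda>l. cconst (\<Prod>m\<in>S. fact m) * Phi_even (cconst (a l S) * schur l))"
    unfolding Phi_apply P by (rule Phi_Sum_any)
  also have "\<dots> = Sum_any (\<lambda>l. cconst (a l S) * (koschorke l * cconst (\<Prod>j\<in>S. fact j)))"
    by (simp only: Phi_even_cconst_mult Phi_even_schur) (simp only: mult_ac)
  also have "\<dots> = Sum_any (\<lambda>(l, J). scal (a l J) (class_F l J) S)"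
    using Sum_any_scal_oddprod[OF supp, of koschorke fact S] unfolding class_F_def by simp
  finally show "Phi P S = Sum_any (\<lambda>(l, J). scal (a l J) (class_F l J) S)" .
qed

theorem theorem5p16:
  fixes P :: spoly
  assumes "wf_spoly P"
    and "NS_singular aR bR P"
  shows "(\<exists>!a. schur_expansion a P)
    \<and> (\<forall>a. schur_expansion a P \<longrightarrow>
          Phi P = (\<lambda>S. Sum_any (\<lambda>(l, J). scal (a l J) (class_F l J) S)))
    \<and> NS_singular aF bF (Phi P)"
proof (intro conjI allI impI)
  show "\<exists>!a. schur_expansion a P"
    using schur_expansion_exists[OF assms(1)] schur_expansion_unique by blast
  show "Phi P = (\<lambda>S. Sum_any (\<lambda>(l, J). scal (a l J) (class_F l J) S))" if "schur_expansion a P" for a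
    using that by (rule Phi_schur_expansion)
  have "finite_odd_support P"
    using assms(1) by (auto simp: wf_spoly_def finite_odd_support_def)
  then show "NS_singular aF bF (Phi P)"
    using assms(2) by (rule NS_singular_Phi)
qed

end
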